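(* Let $g',g''\in G$ and let $(\xi''_i,\xi'_i)\in A_{g''}\times A_{g'}$, $i=1,2$, be composable pairs. Then $$\varpi_{g''g'}\big(\xi''_1*\xi'_1,\ \xi''_2*\xi'_2\big)=\varpi_{g''}(\xi''_1,\xi''_2)+\varpi_{g'}(\xi'_1,\xi'_2)-\lambda\big((X''_1,X'_1),(X''_2,X'_2)\big),$$ where $X''_i=\mathsf a(\xi''_i)\in T_{g''}G$, $X'_i=\mathsf a(\xi'_i)\in T_{g'}G$, and $\lambda=\tfrac12\,\mathrm{pr}_1^*\theta^L\cdot\mathrm{pr}_2^*\theta^R\in\Omega^2(G\times G)$ with $\mathrm{pr}_1(g'',g')=g''$, $\mathrm{pr}_2(g'',g')=g'$. That is, on $A^{[2]}$ one has $\mathrm{mult}_A^!\varpi=\mathrm{pr}_1^!\varpi+\mathrm{pr}_2^!\varpi-\lambda$.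
   Context: Let $G$ be a Lie group with Lie algebra $\mathfrak g$ carrying an $\mathrm{Ad}$-invariant symmetric bilinear form $\cdot$, $\theta^L=g^{-1}\mathrm dg$, $\theta^R=\mathrm dg\,g^{-1}$; for 1-forms $\alpha,\beta$ with values in $\mathfrak g$, $(\alpha\cdot\beta)(Y_1,Y_2)=\alpha(Y_1)\cdot\beta(Y_2)-\alpha(Y_2)\cdot\beta(Y_1)$. $A_g$ is the space of $\xi\in C^\infty(\mathbb R,\mathfrak g)$ with $\xi(t+1)=\mathrm{Ad}_g\xi(t)+v_\xi$ for a constant $v_\xi\in\mathfrak g$; the anchor $\mathsf a(\xi)\in T_gG$ is determined by $\theta^R(\mathsf a(\xi))=v_\xi$. The 2-form $\varpi$ on $A$ is $\varpi_g(\xi,\zeta)=\int_0^1\dot\xi\cdot\zeta\,dt-\mathrm{Ad}_g(\xi(0))\cdot v_\zeta-\tfrac12v_\xi\cdot v_\zeta$. A pair $(\xi'',\xi')\in A_{g''}\times A_{g'}$ is composable if $\xi'(1)=\xi''(0)$ and the concatenation $\xi''*\xi'$ is smooth, where $(\xi''*\xi')(t)=\xi'(2t)$ for $0\le t\le\tfrac12$, $=\xi''(2t-1)$ for $\tfrac12\le t\le1$, extended to all $t$ by $(\xi''*\xi')(t+1)=\mathrm{Ad}_{g''g'}(\xi''*\xi')(t)+\mathrm{Ad}_{g''}v_{\xi'}+v_{\xi''}$; then $\xi''*\xi'\in A_{g''g'}$. $A^{[2]}\subset A\times A$ is the bundle of composable pairs and $\mathrm{mult}_A(\xi'',\xi')=\xi''*\xi'$.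 *)

theory Defs
  imports "HOL-Analysis.Analysis" "HOL-Algebra.Group"
begin

text \<open>Abstract model of the data of a Lie group G with Lie algebra 'v.
  G is a group (HOL-Algebra), Ad its adjoint action on the finite-dimensional
  real vector space 'v, B the invariant symmetric bilinear form.
  Tangent vectors X in T_g G are represented by their right trivialization
  theta^R(X) in 'v; then theta^L(X) = Ad (g^-1) (theta^R X).\<close>

definition smooth_curve :: "(real \<Rightarrow> 'v::real_normed_vector) \<Rightarrow> bool" where
  "smooth_curve f \<longleftrightarrow>
     (\<exists>D. D 0 = f \<and> (\<forall>k t. (D k has_vector_derivative D (Suc k) t) (at t)))"

definition vconst :: "('g \<Rightarrow> 'v \<Rightarrow> 'v) \<Rightarrow> 'g \<Rightarrow> (real \<Rightarrow> 'v) \<Rightarrow> 'v::real_vector" where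
  "vconst Ad g \<xi> = \<xi> 1 - Ad g (\<xi> 0)"

definition inA :: "('g \<Rightarrow> 'v \<Rightarrow> 'v) \<Rightarrow> 'g \<Rightarrow> (real \<Rightarrow> 'v::real_normed_vector) \<Rightarrow> bool" where
  "inA Ad g \<xi> \<longleftrightarrow> smooth_curve \<xi> \<and> (\<exists>v. \<forall>t. \<xi> (t + 1) = Ad g (\<xi> t) + v)"

text \<open>anchor, expressed through its right trivialization theta^R(a(xi)) = v_xi\<close>
definition anchorR :: "('g \<Rightarrow> 'v \<Rightarrow> 'v) \<Rightarrow> 'g \<Rightarrow> (real \<Rightarrow> 'v) \<Rightarrow> 'v::real_vector" where
  "anchorR Ad g \<xi> = vconst Ad g \<xi>"

definition varpi :: "('v \<Rightarrow> 'v \<Rightarrow> real) \<Rightarrow> ('g \<Rightarrow> 'v \<Rightarrow> 'v) \<Rightarrow> 'g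
     \<Rightarrow> (real \<Rightarrow> 'v::euclidean_space) \<Rightarrow> (real \<Rightarrow> 'v) \<Rightarrow> real" where
  "varpi B Ad g \<xi> \<zeta> =
     integral {0..1} (\<lambda>t. B (vector_derivative \<xi> (at t)) (\<zeta> t))
     - B (Ad g (\<xi> 0)) (vconst Ad g \<zeta>)
     - 1/2 * B (vconst Ad g \<xi>) (vconst Ad g \<zeta>)"

definition is_concat :: "('g, 'b) monoid_scheme \<Rightarrow> ('g \<Rightarrow> 'v \<Rightarrow> 'v) \<Rightarrow> 'g \<Rightarrow> 'g
     \<Rightarrow> (real \<Rightarrow> 'v::real_vector) \<Rightarrow> (real \<Rightarrow> 'v) \<Rightarrow> (real \<Rightarrow> 'v) \<Rightarrow> bool" where
  "is_concat G Ad g2 g1 \<xi>2 \<xi>1 \<zeta> \<longleftrightarrow>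
     (\<forall>t\<in>{0..1/2}. \<zeta> t = \<xi>1 (2 * t)) \<and>
     (\<forall>t\<in>{1/2..1}. \<zeta> t = \<xi>2 (2 * t - 1)) \<and>
     (\<forall>t. \<zeta> (t + 1) = Ad (g2 \<otimes>\<^bsub>G\<^esub> g1) (\<zeta> t) + Ad g2 (vconst Ad g1 \<xi>1) + vconst Ad g2 \<xi>2)"

definition concat :: "('g, 'b) monoid_scheme \<Rightarrow> ('g \<Rightarrow> 'v \<Rightarrow> 'v) \<Rightarrow> 'g \<Rightarrow> 'g
     \<Rightarrow> (real \<Rightarrow> 'v::real_vector) \<Rightarrow> (real \<Rightarrow> 'v) \<Rightarrow> (real \<Rightarrow> 'v)" where
  "concat G Ad g2 g1 \<xi>2 \<xi>1 = (THE \<zeta>. is_concat G Ad g2 g1 \<xi>2 \<xi>1 \<zeta>)"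

definition composable :: "('g, 'b) monoid_scheme \<Rightarrow> ('g \<Rightarrow> 'v \<Rightarrow> 'v) \<Rightarrow> 'g \<Rightarrow> 'g
     \<Rightarrow> (real \<Rightarrow> 'v::real_normed_vector) \<Rightarrow> (real \<Rightarrow> 'v) \<Rightarrow> bool" where
  "composable G Ad g2 g1 \<xi>2 \<xi>1 \<longleftrightarrow>
     inA Ad g2 \<xi>2 \<and> inA Ad g1 \<xi>1 \<and> \<xi>1 1 = \<xi>2 0 \<and>
     smooth_curve (concat G Ad g2 g1 \<xi>2 \<xi>1)"

definition thetaL :: "('g, 'b) monoid_scheme \<Rightarrow> ('g \<Rightarrow> 'v \<Rightarrow> 'v) \<Rightarrow> 'g \<Rightarrow> 'v \<Rightarrow> 'v" where
  "thetaL G Ad g XR = Ad (inv\<^bsub>G\<^esub> g) XR"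

text \<open>lambda = 1/2 pr1^* theta^L . pr2^* theta^R at (g'',g'), evaluated on
  (X''1,X'1), (X''2,X'2) (tangent vectors given by right trivializations)\<close>
definition lam :: "('g, 'b) monoid_scheme \<Rightarrow> ('g \<Rightarrow> 'v \<Rightarrow> 'v) \<Rightarrow> ('v \<Rightarrow> 'v \<Rightarrow> real)
     \<Rightarrow> 'g \<Rightarrow> 'g \<Rightarrow> ('v \<times> 'v) \<Rightarrow> ('v \<times> 'v) \<Rightarrow> real" where
  "lam G Ad B g2 g1 Y1 Y2 =
     1/2 * (B (thetaL G Ad g2 (fst Y1)) (snd Y2) - B (thetaL G Ad g2 (fst Y2)) (snd Y1))"

end

theory Submission
  imports Defs
begin

(* The form varpi_g(xi, zeta) consists of the "pairing integral"
   int_0^1 xi'.zeta dt and boundary terms built from xi(0) and the constants v_xi.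
   The proof treats the two kinds of terms separately:
   (1) Analysis: reparametrising the halves [0,1/2] and [1/2,1] of the unit interval
       affinely onto [0,1] shows that the pairing integral of two concatenations is
       the sum of the pairing integrals of the pieces.
   (2) Algebra: the quasi-periodic extension defining xi''*xi' exists and is unique
       (its step map x |-> Ad_g x + v is a bijection), so the concatenation really has
       the prescribed values; hence v_{xi''*xi'} = Ad_{g''} v_{xi'} + v_{xi''}.
       Substituting this into the boundary terms, Ad-invariance of the form leaves
       exactly the correction term lambda. *)


lemma smooth_curve_derivative:
  assumes "smooth_curve f"
  shows "(f has_vector_derivative vector_derivative f (at t)) (at t)"
    and "continuous_on UNIV (\<lambda>t. vector_derivative f (at t))"
    and "continuous_on UNIV f"
proof -
  obtain D where D0: "D 0 = f" and D: "\<And>k t. (D k has_vector_derivative D (Suc k) t) (at t)"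
    using assms unfolding smooth_curve_def by blast
  have f_deriv: "(f has_vector_derivative D 1 t) (at t)" for t
    using D[of 0 t] D0 by simp
  hence vd: "vector_derivative f (at t) = D 1 t" for t
    by (simp add: vector_derivative_at)
  show "(f has_vector_derivative vector_derivative f (at t)) (at t)"
    using f_deriv vd by simp
  have "continuous_on UNIV (D 1)"
    using D[of 1] by (meson continuous_at_imp_continuous_on has_vector_derivative_continuous)
  thus "continuous_on UNIV (\<lambda>t. vector_derivative f (at t))"
    using vd by simp
  show "continuous_on UNIV f"
    using f_deriv by (meson continuous_at_imp_continuous_on has_vector_derivative_continuous)
qed

lemma vector_derivative_affine_reparam:
  assumes "smooth_curve a" and "\<And>s. s \<in> S \<Longrightarrow> z s = a (m * s + c)"
    and "open S" and "t \<in> S"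
  shows "vector_derivative z (at t) = m *\<^sub>R vector_derivative a (at (m * t + c))"
proof -
  have "((\<lambda>s. m * s + c) has_vector_derivative m) (at t)"
    by (auto intro!: derivative_eq_intros)
  hence "((a \<circ> (\<lambda>s. m * s + c)) has_vector_derivative
           m *\<^sub>R vector_derivative a (at (m * t + c))) (at t)"
    by (rule vector_diff_chain_at) (use smooth_curve_derivative(1)[OF assms(1)] in simp)
  hence "(z has_vector_derivative m *\<^sub>R vector_derivative a (at (m * t + c))) (at t)"
    by (rule has_vector_derivative_transform_within_open[OF _ assms(3,4)])
       (simp add: assms(2))
  thus ?thesis by (rule vector_derivative_at)
qed

lemma integral_affine_reparam:
  fixes h :: "real \<Rightarrow> real"
  assumes "continuous_on UNIV h" and "m > 0"
  shows "integral {-c/m..(1-c)/m} (\<lambda>t. m * h (m * t + c)) = integral {0..1} h"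
proof -
  have "(h has_integral integral {0..1} h) (cbox 0 1)"
    using assms(1) by (auto intro: integrable_continuous_interval continuous_on_subset)
  from has_integral_affinity'[OF this assms(2), of c]
  have "((\<lambda>t. h (m * t + c)) has_integral integral {0..1} h / m) {-c/m..(1-c)/m}"
    by (simp add: divide_inverse mult.commute)
  from has_integral_mult_right[OF this, of m] assms(2) show ?thesis
    by (intro integral_unique) simp
qed

lemma continuous_on_bilinear:
  fixes B :: "'v::euclidean_space \<Rightarrow> 'v \<Rightarrow> real"
  assumes "bilinear B" "continuous_on UNIV f" "continuous_on UNIV g"
  shows "continuous_on UNIV (\<lambda>t::real. B (f t) (g t))"
  using assms(1) unfolding bilinear_conv_bounded_bilinear
  by (intro bounded_bilinear.continuous_on[of B] assms(2,3)) auto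


subsection \<open>The pairing integral of a concatenation\<close>

definition pairing_integral ::
  "('v \<Rightarrow> 'v \<Rightarrow> real) \<Rightarrow> (real \<Rightarrow> 'v::real_normed_vector) \<Rightarrow> (real \<Rightarrow> 'v) \<Rightarrow> real" where
  "pairing_integral B \<xi> \<zeta> = integral {0..1} (\<lambda>t. B (vector_derivative \<xi> (at t)) (\<zeta> t))"

text \<open>If on an interval of length \<open>1/m\<close> two curves are affine reparametrisations of
  smooth curves \<open>a\<close>, \<open>b\<close>, their pairing over that interval is the pairing integral of
  \<open>a\<close> and \<open>b\<close>: the factor \<open>m\<close> of the chain rule cancels the Jacobian \<open>1/m\<close>.\<close>
lemma pairing_integral_affine_piece:
  fixes B :: "'v::euclidean_space \<Rightarrow> 'v \<Rightarrow> real"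
  assumes bil: "bilinear B" and "smooth_curve a" "smooth_curve b" and "m > 0"
    and piece: "\<And>t. t \<in> {-c/m<..<(1-c)/m} \<Longrightarrow> z1 t = a (m * t + c) \<and> z2 t = b (m * t + c)"
  shows "integral {-c/m..(1-c)/m} (\<lambda>t. B (vector_derivative z1 (at t)) (z2 t))
         = pairing_integral B a b"
proof -
  define H where "H = (\<lambda>t. B (vector_derivative a (at t)) (b t))"
  have "integral {-c/m..(1-c)/m} (\<lambda>t. B (vector_derivative z1 (at t)) (z2 t))
        = integral {-c/m..(1-c)/m} (\<lambda>t. m * H (m * t + c))"
  proof (rule integral_spike[of "{-c/m, (1-c)/m}"])
    fix t assume "t \<in> {-c/m..(1-c)/m} - {-c/m, (1-c)/m}"
    hence t: "t \<in> {-c/m<..<(1-c)/m}" by auto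
    have "vector_derivative z1 (at t) = m *\<^sub>R vector_derivative a (at (m * t + c))"
      by (rule vector_derivative_affine_reparam[OF \<open>smooth_curve a\<close> _ _ t]) (auto simp: piece)
    thus "m * H (m * t + c) = B (vector_derivative z1 (at t)) (z2 t)"
      using piece[OF t] bilinear_lmul[OF bil] by (simp add: H_def)
  qed simp
  also have "\<dots> = integral {0..1} H"
    using continuous_on_bilinear[OF bil smooth_curve_derivative(2) smooth_curve_derivative(3)]
          assms(2,3,4)
    by (intro integral_affine_reparam) (simp_all add: H_def)
  finally show ?thesis by (simp add: H_def pairing_integral_def)
qed

lemma pairing_integral_concat:
  fixes B :: "'v::euclidean_space \<Rightarrow> 'v \<Rightarrow> real"
  assumes bil: "bilinear B"
    and smooth: "smooth_curve a1" "smooth_curve b1" "smooth_curve a2" "smooth_curve b2"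
      "smooth_curve z1" "smooth_curve z2"
    and first_half: "\<And>t. t \<in> {0..1/2} \<Longrightarrow> z1 t = a1 (2 * t) \<and> z2 t = a2 (2 * t)"
    and second_half: "\<And>t. t \<in> {1/2..1} \<Longrightarrow> z1 t = b1 (2 * t - 1) \<and> z2 t = b2 (2 * t - 1)"
  shows "pairing_integral B z1 z2 = pairing_integral B a1 a2 + pairing_integral B b1 b2"
proof -
  define F where "F = (\<lambda>t. B (vector_derivative z1 (at t)) (z2 t))"
  have "continuous_on UNIV F"
    unfolding F_def using smooth(5,6)
    by (intro continuous_on_bilinear[OF bil] smooth_curve_derivative(2,3))
  hence "F integrable_on {0..1}"
    by (auto intro: integrable_continuous_interval continuous_on_subset)
  hence "pairing_integral B z1 z2 = integral {0..1/2} F + integral {1/2..1} F"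
    by (simp add: pairing_integral_def F_def[symmetric]
                  Henstock_Kurzweil_Integration.integral_combine)
  moreover have "integral {-0/2..(1-0)/2} F = pairing_integral B a1 a2"
    unfolding F_def
    by (rule pairing_integral_affine_piece[OF bil smooth(1,3)]) (auto simp: first_half)
  moreover have "integral {-(-1)/2..(1-(-1))/2} F = pairing_integral B b1 b2"
    unfolding F_def
    by (rule pairing_integral_affine_piece[OF bil smooth(2,4)]) (auto simp: second_half)
  ultimately show ?thesis by simp
qed


subsection \<open>Quasi-periodic extension\<close>

definition iter_int :: "('a \<Rightarrow> 'a) \<Rightarrow> ('a \<Rightarrow> 'a) \<Rightarrow> int \<Rightarrow> 'a \<Rightarrow> 'a" where
  "iter_int T Ti k = (if 0 \<le> k then T ^^ nat k else Ti ^^ nat (-k))"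

lemma iter_int_succ:
  assumes "\<And>x. T (Ti x) = x"
  shows "iter_int T Ti (k + 1) x = T (iter_int T Ti k x)"
proof (cases "0 \<le> k")
  case True
  hence "nat (k + 1) = Suc (nat k)" by simp
  thus ?thesis using True by (simp add: iter_int_def)
next
  case False
  hence "nat (-k) = Suc (nat (-(k + 1)))" by simp
  thus ?thesis using False assms by (simp add: iter_int_def)
qed

lemma quasiperiodic_extension_exists:
  fixes z0 :: "real \<Rightarrow> 'a"
  assumes TTi: "\<And>x. T (Ti x) = x" and compatible: "z0 1 = T (z0 0)"
  shows "\<exists>z. (\<forall>t\<in>{0..1}. z t = z0 t) \<and> (\<forall>t. z (t + 1) = T (z t))"
proof -
  define z where "z t = iter_int T Ti \<lfloor>t\<rfloor> (z0 (t - \<lfloor>t\<rfloor>))" for t :: real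
  have "z t = z0 t" if "t \<in> {0..1}" for t
  proof (cases "t = 1")
    case True thus ?thesis using compatible by (simp add: z_def iter_int_def)
  next
    case False
    with that have "\<lfloor>t\<rfloor> = 0" by (auto intro!: floor_unique)
    thus ?thesis by (simp add: z_def iter_int_def)
  qed
  moreover have "z (t + 1) = T (z t)" for t
    unfolding z_def using iter_int_succ[of T Ti, OF TTi] by simp
  ultimately show ?thesis by blast
qed

text \<open>Uniqueness: the extension is determined on \<open>[-n, n+1]\<close> by induction on \<open>n\<close>,
  stepping right with \<open>T\<close> and left with its inverse.\<close>
lemma quasiperiodic_extension_unique:
  fixes z z' :: "real \<Rightarrow> 'a"
  assumes TiT: "\<And>x. Ti (T x) = x"
    and agree: "\<And>t. t \<in> {0..1} \<Longrightarrow> z t = z' t"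
    and step: "\<And>t. z (t + 1) = T (z t)" "\<And>t. z' (t + 1) = T (z' t)"
  shows "z = z'"
proof -
  have "\<forall>t. t \<in> {- real n..real n + 1} \<longrightarrow> z t = z' t" for n
  proof (induction n)
    case 0 then show ?case using agree by auto
  next
    case (Suc n)
    show ?case
    proof (intro allI impI)
      fix t assume t: "t \<in> {- real (Suc n)..real (Suc n) + 1}"
      consider "t \<in> {- real n..real n + 1}" | "t > real n + 1" | "t < - real n"
        using t by force
      then show "z t = z' t"
      proof cases
        case 1 then show ?thesis using Suc by blast
      next
        case 2
        hence "z (t - 1) = z' (t - 1)" using Suc t by auto
        thus ?thesis using step[of "t - 1"] by simp
      next
        case 3
        hence "z (t + 1) = z' (t + 1)" using Suc t by auto
        hence "T (z t) = T (z' t)" using step by simp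
        thus ?thesis by (metis TiT)
      qed
    qed
  qed
  show ?thesis
  proof
    fix t
    obtain n :: nat where "real n \<ge> \<bar>t\<bar>" using real_arch_simple by blast
    hence "t \<in> {- real n..real n + 1}" by auto
    thus "z t = z' t"
      using \<open>\<forall>t. t \<in> {- real n..real n + 1} \<longrightarrow> z t = z' t\<close> by blast
  qed
qed

definition join_halves :: "(real \<Rightarrow> 'a) \<Rightarrow> (real \<Rightarrow> 'a) \<Rightarrow> real \<Rightarrow> 'a" where
  "join_halves a b t = (if t \<le> 1/2 then a (2 * t) else b (2 * t - 1))"

lemma halves_iff_join_halves:
  assumes ab: "a 1 = b 0"
  shows "((\<forall>t\<in>{0..1/2}. \<zeta> t = a (2 * t)) \<and> (\<forall>t\<in>{1/2..1}. \<zeta> t = b (2 * t - 1)))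
         \<longleftrightarrow> (\<forall>t\<in>{0..1}. \<zeta> t = join_halves a b t)"
proof
  assume "(\<forall>t\<in>{0..1/2}. \<zeta> t = a (2 * t)) \<and> (\<forall>t\<in>{1/2..1}. \<zeta> t = b (2 * t - 1))"
  thus "\<forall>t\<in>{0..1}. \<zeta> t = join_halves a b t"
    by (auto simp: join_halves_def)
next
  assume h: "\<forall>t\<in>{0..1}. \<zeta> t = join_halves a b t"
  have "\<zeta> t = b (2 * t - 1)" if "t \<in> {1/2..1}" for t
  proof (cases "t = 1/2")
    case True
    have "\<zeta> (1/2) = b (2 * (1/2) - 1)"
      using h[rule_format, of "1/2"] ab by (simp add: join_halves_def)
    thus ?thesis unfolding True .
  next
    case False
    thus ?thesis using h that by (auto simp: join_halves_def)
  qed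
  with h show "(\<forall>t\<in>{0..1/2}. \<zeta> t = a (2 * t)) \<and> (\<forall>t\<in>{1/2..1}. \<zeta> t = b (2 * t - 1))"
    by (auto simp: join_halves_def)
qed


locale adjoint_action = group G for G :: "('g, 'b) monoid_scheme" (structure) +
  fixes Ad :: "'g \<Rightarrow> 'v::real_vector \<Rightarrow> 'v"
  assumes Ad_lin: "g \<in> carrier G \<Longrightarrow> linear (Ad g)"
    and Ad_one: "Ad \<one> = id"
    and Ad_mult: "g \<in> carrier G \<Longrightarrow> h \<in> carrier G \<Longrightarrow> Ad (g \<otimes> h) = Ad g \<circ> Ad h"
begin

lemma Ad_inv_cancel:
  assumes "g \<in> carrier G"
  shows "Ad g (Ad (inv g) y) = y" and "Ad (inv g) (Ad g y) = y"
proof -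
  have "Ad g \<circ> Ad (inv g) = id" and "Ad (inv g) \<circ> Ad g = id"
    using Ad_mult[OF assms inv_closed[OF assms]] Ad_mult[OF inv_closed[OF assms] assms]
    by (simp_all add: assms Ad_one)
  thus "Ad g (Ad (inv g) y) = y" and "Ad (inv g) (Ad g y) = y"
    by (metis comp_apply id_apply)+
qed

lemma concat_is_concat:
  assumes g1G: "g1 \<in> carrier G" and g2G: "g2 \<in> carrier G" and ab: "a 1 = b 0"
  shows "is_concat G Ad g2 g1 b a (concat G Ad g2 g1 b a)"
proof -
  define g where "g = g2 \<otimes> g1"
  have gG: "g \<in> carrier G" unfolding g_def using g1G g2G by simp
  define w where "w = Ad g2 (vconst Ad g1 a) + vconst Ad g2 b"
  define T where "T x = Ad g x + w" for x
  define Ti where "Ti x = Ad (inv g) (x - w)" for x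
  have TTi: "T (Ti x) = x" and TiT: "Ti (T x) = x" for x
    unfolding T_def Ti_def using Ad_inv_cancel[OF gG] by simp_all
  have "join_halves a b 1 = T (join_halves a b 0)"
    using linear_diff[OF Ad_lin[OF g2G]] ab
    by (simp add: join_halves_def T_def w_def vconst_def g_def Ad_mult[OF g2G g1G])
  have is_concat_iff: "is_concat G Ad g2 g1 b a \<zeta> \<longleftrightarrow>
      (\<forall>t\<in>{0..1}. \<zeta> t = join_halves a b t) \<and> (\<forall>t. \<zeta> (t + 1) = T (\<zeta> t))" for \<zeta>
    unfolding is_concat_def halves_iff_join_halves[of a b, OF ab, symmetric] T_def w_def g_def
    by (simp add: add.assoc)
  obtain z where z: "\<forall>t\<in>{0..1}. z t = join_halves a b t" "\<forall>t. z (t + 1) = T (z t)"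
    using quasiperiodic_extension_exists[of T Ti, OF TTi \<open>join_halves a b 1 = _\<close>] by blast
  have "\<exists>!\<zeta>. is_concat G Ad g2 g1 b a \<zeta>"
    unfolding is_concat_iff
  proof (rule ex1I[of _ z])
    fix y assume "(\<forall>t\<in>{0..1}. y t = join_halves a b t) \<and> (\<forall>t. y (t + 1) = T (y t))"
    thus "y = z" using quasiperiodic_extension_unique[of Ti T y z, OF TiT] z by auto
  qed (use z in blast)
  thus ?thesis unfolding concat_def by (rule theI')
qed

lemma vconst_concat:
  assumes g1G: "g1 \<in> carrier G" and g2G: "g2 \<in> carrier G" and ab: "a 1 = b 0"
    and "is_concat G Ad g2 g1 b a \<zeta>"
  shows "vconst Ad (g2 \<otimes> g1) \<zeta> = Ad g2 (vconst Ad g1 a) + vconst Ad g2 b"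
proof -
  have "\<zeta> 0 = a 0" and "\<zeta> 1 = b 1"
    using assms(4) unfolding is_concat_def by auto
  thus ?thesis
    using linear_diff[OF Ad_lin[OF g2G]] ab
    by (simp add: vconst_def Ad_mult[OF g2G g1G])
qed

end

locale invariant_form = adjoint_action G Ad
  for G :: "('g, 'b) monoid_scheme" (structure) and Ad :: "'g \<Rightarrow> 'v::euclidean_space \<Rightarrow> 'v" +
  fixes B :: "'v \<Rightarrow> 'v \<Rightarrow> real"
  assumes B_bil: "bilinear B"
    and B_sym: "\<And>x y. B x y = B y x"
    and B_inv: "g \<in> carrier G \<Longrightarrow> B (Ad g x) (Ad g y) = B x y"
begin

lemma thetaL_pairing:
  assumes "g \<in> carrier G"
  shows "B (thetaL G Ad g x) y = B x (Ad g y)"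
  using B_inv[OF assms, of "Ad (inv g) x" y] Ad_inv_cancel[OF assms]
  by (simp add: thetaL_def)

text \<open>Here \<open>x = \<xi>'(0)\<close>,
  \<open>u\<^sub>i = v\<^bsub>\<xi>'\<^sub>i\<^esub>\<close>, \<open>w\<^sub>i = v\<^bsub>\<xi>''\<^sub>i\<^esub>\<close> and \<open>\<xi>''(0) = \<xi>'(1) = u\<^sub>1 + Ad\<^bsub>g'\<^esub> x\<close>.\<close>
lemma boundary_terms:
  assumes g1G: "g1 \<in> carrier G" and g2G: "g2 \<in> carrier G"
  shows "- B (Ad (g2 \<otimes> g1) x) (Ad g2 u2 + w2) - 1/2 * B (Ad g2 u1 + w1) (Ad g2 u2 + w2)
         = (- B (Ad g2 (u1 + Ad g1 x)) w2 - 1/2 * B w1 w2)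
           + (- B (Ad g1 x) u2 - 1/2 * B u1 u2)
           - lam G Ad B g2 g1 (w1, u1) (w2, u2)"
  unfolding lam_def fst_conv snd_conv thetaL_pairing[OF g2G]
  using linear_add[OF Ad_lin[OF g2G]] bilinear_ladd[OF B_bil] bilinear_radd[OF B_bil]
  by (simp add: Ad_mult[OF g2G g1G] B_inv[OF g2G] algebra_simps B_sym)

end


theorem proposition6p1:
  fixes G :: "('g, 'b) monoid_scheme"
    and Ad :: "'g \<Rightarrow> 'v::euclidean_space \<Rightarrow> 'v"
    and B :: "'v \<Rightarrow> 'v \<Rightarrow> real"
    and g1 g2 :: 'g
    and \<xi>2\<^sub>1 \<xi>1\<^sub>1 \<xi>2\<^sub>2 \<xi>1\<^sub>2 :: "real \<Rightarrow> 'v"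
  assumes grp: "group G"
    and Ad_lin: "\<And>g. g \<in> carrier G \<Longrightarrow> linear (Ad g)"
    and Ad_one: "Ad \<one>\<^bsub>G\<^esub> = id"
    and Ad_mult: "\<And>g h. g \<in> carrier G \<Longrightarrow> h \<in> carrier G \<Longrightarrow> Ad (g \<otimes>\<^bsub>G\<^esub> h) = Ad g \<circ> Ad h"
    and B_bil: "bilinear B"
    and B_sym: "\<And>x y. B x y = B y x"
    and B_inv: "\<And>g x y. g \<in> carrier G \<Longrightarrow> B (Ad g x) (Ad g y) = B x y"
    and g1G: "g1 \<in> carrier G" and g2G: "g2 \<in> carrier G"
    and comp1: "composable G Ad g2 g1 \<xi>2\<^sub>1 \<xi>1\<^sub>1"
    and comp2: "composable G Ad g2 g1 \<xi>2\<^sub>2 \<xi>1\<^sub>2"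
  shows "varpi B Ad (g2 \<otimes>\<^bsub>G\<^esub> g1)
            (concat G Ad g2 g1 \<xi>2\<^sub>1 \<xi>1\<^sub>1) (concat G Ad g2 g1 \<xi>2\<^sub>2 \<xi>1\<^sub>2)
         = varpi B Ad g2 \<xi>2\<^sub>1 \<xi>2\<^sub>2 + varpi B Ad g1 \<xi>1\<^sub>1 \<xi>1\<^sub>2
           - lam G Ad B g2 g1
               (anchorR Ad g2 \<xi>2\<^sub>1, anchorR Ad g1 \<xi>1\<^sub>1)
               (anchorR Ad g2 \<xi>2\<^sub>2, anchorR Ad g1 \<xi>1\<^sub>2)"
proof -
  interpret invariant_form G Ad B
    using grp Ad_lin Ad_one Ad_mult B_bil B_sym B_inv
    by (intro invariant_form.intro adjoint_action.intro invariant_form_axioms.intro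
              adjoint_action_axioms.intro) auto
  define z1 where "z1 = concat G Ad g2 g1 \<xi>2\<^sub>1 \<xi>1\<^sub>1"
  define z2 where "z2 = concat G Ad g2 g1 \<xi>2\<^sub>2 \<xi>1\<^sub>2"
  note c1 = comp1[unfolded composable_def inA_def, folded z1_def]
  note c2 = comp2[unfolded composable_def inA_def, folded z2_def]
  have z1: "is_concat G Ad g2 g1 \<xi>2\<^sub>1 \<xi>1\<^sub>1 z1" and z2: "is_concat G Ad g2 g1 \<xi>2\<^sub>2 \<xi>1\<^sub>2 z2"
    unfolding z1_def z2_def using concat_is_concat[OF g1G g2G] c1 c2 by auto
  have "pairing_integral B z1 z2
        = pairing_integral B \<xi>1\<^sub>1 \<xi>1\<^sub>2 + pairing_integral B \<xi>2\<^sub>1 \<xi>2\<^sub>2"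
    using z1 z2 c1 c2 by (intro pairing_integral_concat[OF B_bil]) (auto simp: is_concat_def)
  moreover have "z1 0 = \<xi>1\<^sub>1 0"
    using z1 by (simp add: is_concat_def)
  moreover have "\<xi>2\<^sub>1 0 = vconst Ad g1 \<xi>1\<^sub>1 + Ad g1 (\<xi>1\<^sub>1 0)"
    using c1 by (simp add: vconst_def)
  ultimately show ?thesis
    using boundary_terms[OF g1G g2G] c1 c2
    by (simp add: varpi_def pairing_integral_def[symmetric] anchorR_def z1_def[symmetric]
                  z2_def[symmetric] vconst_concat[OF g1G g2G _ z1] vconst_concat[OF g1G g2G _ z2])
qed

end
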